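(* Let $G$ be the central product of normal subgroups $H,K$ ($G=HK$, $[H,K]=1$), $Z=H'\cap K'$, and $D$ a divisible abelian group with trivial action. Then $\operatorname{Hom}(Z,D)$ embeds in $\operatorname{H}^2(H/Z,D)\oplus\operatorname{H}^2(K/Z,D)$.
   Context: $X'$ is the commutator subgroup of $X$; $\operatorname{H}^2(X,D)$ is second cohomology with trivial coefficients. *)

theory Defs
  imports "HOL-Algebra.Algebra"
begin

definition divisible_group :: "('d, 'n) monoid_scheme \<Rightarrow> bool" where
  "divisible_group D \<longleftrightarrow> comm_group D \<and>
     (\<forall>d \<in> carrier D. \<forall>n::nat. n > 0 \<longrightarrow> (\<exists>x \<in> carrier D. x [^]\<^bsub>D\<^esub> n = d))"

definition hom_group :: "('a, 'c) monoid_scheme \<Rightarrow> ('d, 'n) monoid_scheme \<Rightarrow> ('a \<Rightarrow> 'd) monoid" where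
  "hom_group A D =
     \<lparr> carrier = hom A D \<inter> extensional (carrier A),
       monoid.mult = (\<lambda>f g. \<lambda>x \<in> carrier A. f x \<otimes>\<^bsub>D\<^esub> g x),
       one = (\<lambda>x \<in> carrier A. \<one>\<^bsub>D\<^esub>) \<rparr>"

definition cocycles2 :: "('a, 'c) monoid_scheme \<Rightarrow> ('d, 'n) monoid_scheme \<Rightarrow> ('a \<times> 'a \<Rightarrow> 'd) set" where
  "cocycles2 Q D = {f. f \<in> carrier Q \<times> carrier Q \<rightarrow>\<^sub>E carrier D \<and>
     (\<forall>x \<in> carrier Q. \<forall>y \<in> carrier Q. \<forall>z \<in> carrier Q.
        f (y, z) \<otimes>\<^bsub>D\<^esub> f (x, y \<otimes>\<^bsub>Q\<^esub> z) = f (x \<otimes>\<^bsub>Q\<^esub> y, z) \<otimes>\<^bsub>D\<^esub> f (x, y))}"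

definition coboundaries2 :: "('a, 'c) monoid_scheme \<Rightarrow> ('d, 'n) monoid_scheme \<Rightarrow> ('a \<times> 'a \<Rightarrow> 'd) set" where
  "coboundaries2 Q D = {f. \<exists>g \<in> carrier Q \<rightarrow>\<^sub>E carrier D.
     f = restrict (\<lambda>p. g (snd p) \<otimes>\<^bsub>D\<^esub> inv\<^bsub>D\<^esub> (g (fst p \<otimes>\<^bsub>Q\<^esub> snd p)) \<otimes>\<^bsub>D\<^esub> g (fst p))
                  (carrier Q \<times> carrier Q)}"

definition cocycle_group :: "('a, 'c) monoid_scheme \<Rightarrow> ('d, 'n) monoid_scheme \<Rightarrow> ('a \<times> 'a \<Rightarrow> 'd) monoid" where
  "cocycle_group Q D =
     \<lparr> carrier = cocycles2 Q D,
       monoid.mult = (\<lambda>f g. restrict (\<lambda>p. f p \<otimes>\<^bsub>D\<^esub> g p) (carrier Q \<times> carrier Q)),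
       one = restrict (\<lambda>p. \<one>\<^bsub>D\<^esub>) (carrier Q \<times> carrier Q) \<rparr>"

definition H2 :: "('a, 'c) monoid_scheme \<Rightarrow> ('d, 'n) monoid_scheme \<Rightarrow> ('a \<times> 'a \<Rightarrow> 'd) set monoid" where
  "H2 Q D = cocycle_group Q D Mod coboundaries2 Q D"

end

theory Submission
  imports Defs
begin

text \<open>
  For a central subgroup \<open>Z\<close> of a group \<open>P\<close>, choosing coset representatives turns every
  homomorphism \<open>f : Z \<rightarrow> D\<close> into a 2-cocycle on \<open>P/Z\<close> (the transgression of \<open>f\<close>).
  If this cocycle is a coboundary \<open>\<delta>g\<close>, then \<open>x \<mapsto> f(x\<cdot>rep(Zx)\<inverse>)\<cdot>g(Zx)\<close> is a
  homomorphism \<open>P \<rightarrow> D\<close> extending \<open>f\<close>; it kills the derived subgroup since \<open>D\<close> is abelian.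
  So when \<open>Z \<subseteq> P'\<close> the transgression \<open>Hom(Z,D) \<rightarrow> H\<^sup>2(P/Z,D)\<close> is injective.
  In a central product \<open>Z = H' \<inter> K'\<close> is central in both \<open>H\<close> and \<open>K\<close>, and the two
  transgressions together embed \<open>Hom(Z,D)\<close> into the sum.
\<close>

section \<open>Pointwise groups, cocycles and \<open>H\<^sup>2\<close>\<close>

definition pointwise_group :: "'x set \<Rightarrow> ('d, 'n) monoid_scheme \<Rightarrow> ('x \<Rightarrow> 'd) set \<Rightarrow> ('x \<Rightarrow> 'd) monoid" where
  "pointwise_group I D S =
     \<lparr> carrier = S,
       monoid.mult = (\<lambda>f g. \<lambda>x \<in> I. f x \<otimes>\<^bsub>D\<^esub> g x),
       one = (\<lambda>x \<in> I. \<one>\<^bsub>D\<^esub>) \<rparr>"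

lemma comm_group_pointwise_group:
  assumes D: "comm_group D" and S: "S \<subseteq> I \<rightarrow>\<^sub>E carrier D"
    and one: "(\<lambda>x \<in> I. \<one>\<^bsub>D\<^esub>) \<in> S"
    and mult: "\<And>f g. f \<in> S \<Longrightarrow> g \<in> S \<Longrightarrow> (\<lambda>x \<in> I. f x \<otimes>\<^bsub>D\<^esub> g x) \<in> S"
    and inv: "\<And>f. f \<in> S \<Longrightarrow> (\<lambda>x \<in> I. inv\<^bsub>D\<^esub> f x) \<in> S"
  shows "comm_group (pointwise_group I D S)"
proof -
  interpret D: comm_group D by (rule D)
  have val: "f x \<in> carrier D" if "f \<in> S" "x \<in> I" for f x
    using S that by auto
  have ext: "f \<in> extensional I" if "f \<in> S" for f
    using S that by (auto simp: PiE_def)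
  show ?thesis
  proof (rule comm_groupI, simp_all add: pointwise_group_def one mult, goal_cases)
    case (1 f g h)
    then show ?case by (intro restrict_ext) (simp add: val D.m_assoc)
  next
    case (2 f g)
    then show ?case by (intro restrict_ext) (simp add: val D.m_comm)
  next
    case (3 f)
    then show ?case using ext[OF 3] by (auto simp: val extensional_def)
  next
    case (4 f)
    then show ?case by (intro bexI[OF _ inv[OF 4]] restrict_ext) (simp add: val)
  qed
qed

lemma hom_group_eq_pointwise_group:
  "hom_group A D = pointwise_group (carrier A) D (hom A D \<inter> extensional (carrier A))"
  by (simp add: hom_group_def pointwise_group_def)

lemma cocycle_group_eq_pointwise_group:
  "cocycle_group Q D = pointwise_group (carrier Q \<times> carrier Q) D (cocycles2 Q D)"
  by (simp add: cocycle_group_def pointwise_group_def)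

lemma comm_group_hom_group:
  assumes A: "monoid A" and D: "comm_group D"
  shows "comm_group (hom_group A D)"
proof -
  interpret A: monoid A by (rule A)
  interpret D: comm_group D by (rule D)
  show ?thesis
    unfolding hom_group_eq_pointwise_group
  proof (rule comm_group_pointwise_group[OF D])
    show "hom A D \<inter> extensional (carrier A) \<subseteq> carrier A \<rightarrow>\<^sub>E carrier D"
      by (auto simp: hom_def PiE_def)
    show "(\<lambda>x\<in>carrier A. \<one>\<^bsub>D\<^esub>) \<in> hom A D \<inter> extensional (carrier A)"
      by (auto simp: hom_def)
    show "(\<lambda>x\<in>carrier A. f x \<otimes>\<^bsub>D\<^esub> g x) \<in> hom A D \<inter> extensional (carrier A)"
      if "f \<in> hom A D \<inter> extensional (carrier A)" "g \<in> hom A D \<inter> extensional (carrier A)" for f g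
      using that by (auto simp: hom_def Pi_def D.m_ac)
    show "(\<lambda>x\<in>carrier A. inv\<^bsub>D\<^esub> f x) \<in> hom A D \<inter> extensional (carrier A)"
      if "f \<in> hom A D \<inter> extensional (carrier A)" for f
      using that by (auto simp: hom_def Pi_def D.inv_mult)
  qed
qed

lemma (in comm_group) mult_of_equal_products:
  assumes "a \<otimes> b = c \<otimes> d" "a' \<otimes> b' = c' \<otimes> d'"
    and "a \<in> carrier G" "b \<in> carrier G" "c \<in> carrier G" "d \<in> carrier G"
    and "a' \<in> carrier G" "b' \<in> carrier G" "c' \<in> carrier G" "d' \<in> carrier G"
  shows "(a \<otimes> a') \<otimes> (b \<otimes> b') = (c \<otimes> c') \<otimes> (d \<otimes> d')"
proof -
  have "(a \<otimes> a') \<otimes> (b \<otimes> b') = (a \<otimes> b) \<otimes> (a' \<otimes> b')" using assms(3-) by (simp add: m_ac)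
  also have "\<dots> = (c \<otimes> d) \<otimes> (c' \<otimes> d')" using assms by simp
  also have "\<dots> = (c \<otimes> c') \<otimes> (d \<otimes> d')" using assms(3-) by (simp add: m_ac)
  finally show ?thesis .
qed

lemma comm_group_cocycle_group:
  assumes Q: "monoid Q" and D: "comm_group D"
  shows "comm_group (cocycle_group Q D)"
proof -
  interpret Q: monoid Q by (rule Q)
  interpret D: comm_group D by (rule D)
  let ?Q2 = "carrier Q \<times> carrier Q"
  have val: "f p \<in> carrier D" if "f \<in> cocycles2 Q D" "p \<in> ?Q2" for f p
    using that by (auto simp: cocycles2_def)
  show ?thesis
    unfolding cocycle_group_eq_pointwise_group
  proof (rule comm_group_pointwise_group[OF D])
    show "cocycles2 Q D \<subseteq> ?Q2 \<rightarrow>\<^sub>E carrier D"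
      by (auto simp: cocycles2_def)
    show "(\<lambda>p\<in>?Q2. \<one>\<^bsub>D\<^esub>) \<in> cocycles2 Q D"
      by (auto simp: cocycles2_def)
    show "(\<lambda>p\<in>?Q2. f p \<otimes>\<^bsub>D\<^esub> g p) \<in> cocycles2 Q D"
      if f: "f \<in> cocycles2 Q D" and g: "g \<in> cocycles2 Q D" for f g
      using f g val[OF f] val[OF g]
      by (auto simp: cocycles2_def intro!: D.mult_of_equal_products)
    show "(\<lambda>p\<in>?Q2. inv\<^bsub>D\<^esub> f p) \<in> cocycles2 Q D" if f: "f \<in> cocycles2 Q D" for f
      using f val[OF f] by (auto simp: cocycles2_def D.inv_mult[symmetric])
  qed
qed

definition coboundary :: "('a, 'c) monoid_scheme \<Rightarrow> ('d, 'n) monoid_scheme \<Rightarrow> ('a \<Rightarrow> 'd) \<Rightarrow> ('a \<times> 'a \<Rightarrow> 'd)" where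
  "coboundary Q D g =
     (\<lambda>(x, y) \<in> carrier Q \<times> carrier Q. g y \<otimes>\<^bsub>D\<^esub> inv\<^bsub>D\<^esub> g (x \<otimes>\<^bsub>Q\<^esub> y) \<otimes>\<^bsub>D\<^esub> g x)"

lemma coboundaries2_eq_image: "coboundaries2 Q D = coboundary Q D ` (carrier Q \<rightarrow>\<^sub>E carrier D)"
  by (auto simp: coboundaries2_def coboundary_def case_prod_beta')

lemma coboundary_in_cocycles2:
  assumes Q: "monoid Q" and D: "comm_group D" and g: "g \<in> carrier Q \<rightarrow> carrier D"
  shows "coboundary Q D g \<in> cocycles2 Q D"
proof -
  interpret Q: monoid Q by (rule Q)
  interpret D: comm_group D by (rule D)
  have gc [simp]: "g x \<in> carrier D" if "x \<in> carrier Q" for x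
    using g that by auto
  have "g z \<otimes>\<^bsub>D\<^esub> inv\<^bsub>D\<^esub> g (y \<otimes>\<^bsub>Q\<^esub> z) \<otimes>\<^bsub>D\<^esub> g y \<otimes>\<^bsub>D\<^esub>
          (g (y \<otimes>\<^bsub>Q\<^esub> z) \<otimes>\<^bsub>D\<^esub> inv\<^bsub>D\<^esub> g (x \<otimes>\<^bsub>Q\<^esub> (y \<otimes>\<^bsub>Q\<^esub> z)) \<otimes>\<^bsub>D\<^esub> g x)
      = g z \<otimes>\<^bsub>D\<^esub> inv\<^bsub>D\<^esub> g (x \<otimes>\<^bsub>Q\<^esub> y \<otimes>\<^bsub>Q\<^esub> z) \<otimes>\<^bsub>D\<^esub> g (x \<otimes>\<^bsub>Q\<^esub> y) \<otimes>\<^bsub>D\<^esub>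
          (g y \<otimes>\<^bsub>D\<^esub> inv\<^bsub>D\<^esub> g (x \<otimes>\<^bsub>Q\<^esub> y) \<otimes>\<^bsub>D\<^esub> g x)"
    (is "?lhs = ?rhs") if "x \<in> carrier Q" "y \<in> carrier Q" "z \<in> carrier Q" for x y z
  proof -
    let ?t = "g x \<otimes>\<^bsub>D\<^esub> g y \<otimes>\<^bsub>D\<^esub> g z \<otimes>\<^bsub>D\<^esub> inv\<^bsub>D\<^esub> g (x \<otimes>\<^bsub>Q\<^esub> y \<otimes>\<^bsub>Q\<^esub> z)"
    note closed = that gc Q.m_closed D.inv_closed D.m_closed
    have "?lhs = ?t \<otimes>\<^bsub>D\<^esub> (inv\<^bsub>D\<^esub> g (y \<otimes>\<^bsub>Q\<^esub> z) \<otimes>\<^bsub>D\<^esub> g (y \<otimes>\<^bsub>Q\<^esub> z))"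
      by (simp only: closed Q.m_assoc D.m_ac)
    also have "\<dots> = ?t \<otimes>\<^bsub>D\<^esub> (inv\<^bsub>D\<^esub> g (x \<otimes>\<^bsub>Q\<^esub> y) \<otimes>\<^bsub>D\<^esub> g (x \<otimes>\<^bsub>Q\<^esub> y))"
      using that by simp
    also have "\<dots> = ?rhs"
      by (simp only: closed Q.m_assoc D.m_ac)
    finally show ?thesis .
  qed
  then show ?thesis
    by (auto simp: cocycles2_def coboundary_def)
qed

lemma coboundary_hom:
  assumes Q: "monoid Q" and D: "comm_group D"
  shows "coboundary Q D \<in> hom (pointwise_group (carrier Q) D (carrier Q \<rightarrow>\<^sub>E carrier D)) (cocycle_group Q D)"
proof (rule homI)
  interpret Q: monoid Q by (rule Q)
  interpret D: comm_group D by (rule D)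
  show "coboundary Q D g \<in> carrier (cocycle_group Q D)"
    if "g \<in> carrier (pointwise_group (carrier Q) D (carrier Q \<rightarrow>\<^sub>E carrier D))" for g
    using that coboundary_in_cocycles2[OF Q D]
    by (auto simp: pointwise_group_def cocycle_group_def)
  show "coboundary Q D (g \<otimes>\<^bsub>pointwise_group (carrier Q) D (carrier Q \<rightarrow>\<^sub>E carrier D)\<^esub> h) =
        coboundary Q D g \<otimes>\<^bsub>cocycle_group Q D\<^esub> coboundary Q D h"
    if "g \<in> carrier (pointwise_group (carrier Q) D (carrier Q \<rightarrow>\<^sub>E carrier D))"
      and "h \<in> carrier (pointwise_group (carrier Q) D (carrier Q \<rightarrow>\<^sub>E carrier D))" for g h
  proof -
    have "g x \<in> carrier D" "h x \<in> carrier D" if "x \<in> carrier Q" for x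
      using \<open>g \<in> _\<close> \<open>h \<in> _\<close> that by (auto simp: pointwise_group_def)
    then show ?thesis
      by (auto simp: pointwise_group_def cocycle_group_def coboundary_def fun_eq_iff D.inv_mult D.m_ac)
  qed
qed

lemma normal_coboundaries2:
  assumes Q: "monoid Q" and D: "comm_group D"
  shows "coboundaries2 Q D \<lhd> cocycle_group Q D"
proof -
  interpret C: comm_group "cocycle_group Q D"
    by (rule comm_group_cocycle_group[OF Q D])
  interpret D: comm_group D by (rule D)
  have "comm_group (pointwise_group (carrier Q) D (carrier Q \<rightarrow>\<^sub>E carrier D))"
    by (rule comm_group_pointwise_group[OF D]) auto
  then interpret cob: group_hom "pointwise_group (carrier Q) D (carrier Q \<rightarrow>\<^sub>E carrier D)"
      "cocycle_group Q D" "coboundary Q D"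
    using coboundary_hom[OF Q D] C.is_group by (simp add: group_hom_def group_hom_axioms_def comm_group_def)
  show ?thesis
    using cob.img_is_subgroup
    by (simp add: C.subgroup_imp_normal coboundaries2_eq_image pointwise_group_def)
qed

lemma group_H2:
  assumes "monoid Q" and "comm_group D"
  shows "group (H2 Q D)"
  unfolding H2_def by (rule normal.factorgroup_is_group[OF normal_coboundaries2[OF assms]])

section \<open>Factor sets of a central subgroup\<close>

locale central_subgroup = group P for P (structure) and Z +
  assumes subgroup_Z: "subgroup Z P"
    and central: "\<And>z x. z \<in> Z \<Longrightarrow> x \<in> carrier P \<Longrightarrow> z \<otimes> x = x \<otimes> z"
begin

lemma normal_Z: "Z \<lhd> P"
proof (rule normal_invI[OF subgroup_Z])
  fix x z assume "x \<in> carrier P" "z \<in> Z"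
  moreover have "z \<in> carrier P" using \<open>z \<in> Z\<close> subgroup.subset[OF subgroup_Z] by blast
  ultimately have "x \<otimes> z \<otimes> inv x = z \<otimes> x \<otimes> inv x" by (simp add: central)
  also have "\<dots> = z" using \<open>x \<in> carrier P\<close> \<open>z \<in> carrier P\<close> by (simp add: m_assoc)
  finally show "x \<otimes> z \<otimes> inv x \<in> Z" using \<open>z \<in> Z\<close> by simp
qed

interpretation N: normal Z P by (rule normal_Z)

abbreviation Q where "Q \<equiv> P Mod Z"

lemma group_Q: "group Q"
  by (rule N.factorgroup_is_group)

interpretation Q: group Q
  by (rule group_Q)

definition rep :: "'a set \<Rightarrow> 'a" where
  "rep U = (SOME x. x \<in> carrier P \<and> U = Z #> x)"

lemma rep_closed: "U \<in> carrier Q \<Longrightarrow> rep U \<in> carrier P"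
  and coset_rep: "U \<in> carrier Q \<Longrightarrow> Z #> rep U = U"
proof -
  assume "U \<in> carrier Q"
  then have "\<exists>x. x \<in> carrier P \<and> U = Z #> x"
    by (auto simp: FactGroup_def RCOSETS_def)
  from someI_ex[OF this] show "rep U \<in> carrier P" "Z #> rep U = U"
    unfolding rep_def by auto
qed

lemma coset_in_Q: "x \<in> carrier P \<Longrightarrow> Z #> x \<in> carrier Q"
  by (auto simp: FactGroup_def RCOSETS_def)

lemma coset_mult: "U \<in> carrier Q \<Longrightarrow> V \<in> carrier Q \<Longrightarrow> U <#> V = Z #> (rep U \<otimes> rep V)"
  using N.rcos_sum[OF rep_closed rep_closed] coset_rep by metis

lemma set_mult_in_Q: "U \<in> carrier Q \<Longrightarrow> V \<in> carrier Q \<Longrightarrow> U <#> V \<in> carrier Q"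
  using Q.m_closed by fastforce

lemma mult_inv_rep_mem: "x \<in> carrier P \<Longrightarrow> x \<otimes> inv rep (Z #> x) \<in> Z"
  using N.rcos_module_imp[OF is_group rep_closed[OF coset_in_Q]] coset_rep[OF coset_in_Q]
    rcos_self[OF _ subgroup_Z] by metis

definition factor_set :: "'a set \<Rightarrow> 'a set \<Rightarrow> 'a" where
  "factor_set U V = rep U \<otimes> rep V \<otimes> inv rep (U <#> V)"

lemma factor_set_mem: "U \<in> carrier Q \<Longrightarrow> V \<in> carrier Q \<Longrightarrow> factor_set U V \<in> Z"
  unfolding factor_set_def using mult_inv_rep_mem[of "rep U \<otimes> rep V"] coset_mult rep_closed
  by simp

lemma rep_mult: "U \<in> carrier Q \<Longrightarrow> V \<in> carrier Q \<Longrightarrow> rep U \<otimes> rep V = factor_set U V \<otimes> rep (U <#> V)"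
  using rep_closed set_mult_in_Q by (simp add: factor_set_def m_assoc)

lemma factor_set_cocycle:
  assumes U: "U \<in> carrier Q" and V: "V \<in> carrier Q" and W: "W \<in> carrier Q"
  shows "factor_set V W \<otimes> factor_set U (V <#> W) = factor_set (U <#> V) W \<otimes> factor_set U V"
proof -
  have UV: "U <#> V \<in> carrier Q" and VW: "V <#> W \<in> carrier Q" and UVW: "U <#> V <#> W \<in> carrier Q"
    using U V W by (auto intro: set_mult_in_Q)
  have assoc: "U <#> (V <#> W) = U <#> V <#> W"
    using Q.m_assoc[OF U V W] by simp
  have Z_carrier: "c \<in> Z \<Longrightarrow> c \<in> carrier P" for c
    using subgroup.subset[OF subgroup_Z] by blast
  note closed = rep_closed[OF U] rep_closed[OF V] rep_closed[OF W] rep_closed[OF UV]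
    rep_closed[OF VW] rep_closed[OF UVW] Z_carrier[OF factor_set_mem] U V W UV VW
  have "factor_set V W \<otimes> factor_set U (V <#> W) \<otimes> rep (U <#> V <#> W)
      = factor_set V W \<otimes> (rep U \<otimes> rep (V <#> W))"
    using closed by (simp add: rep_mult[OF U VW] assoc m_assoc)
  also have "\<dots> = rep U \<otimes> (factor_set V W \<otimes> rep (V <#> W))"
    using closed central[OF factor_set_mem[OF V W] rep_closed[OF U]] by (simp add: m_assoc[symmetric])
  also have "\<dots> = rep U \<otimes> rep V \<otimes> rep W"
    using closed by (simp add: rep_mult[OF V W] m_assoc)
  also have "\<dots> = factor_set U V \<otimes> factor_set (U <#> V) W \<otimes> rep (U <#> V <#> W)"
    using closed by (simp add: rep_mult[OF U V] rep_mult[OF UV W] m_assoc)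
  finally have "factor_set V W \<otimes> factor_set U (V <#> W) = factor_set U V \<otimes> factor_set (U <#> V) W"
    using closed by (metis m_closed r_cancel)
  then show ?thesis
    using central[OF factor_set_mem[OF U V]] closed by simp
qed

lemma mult_inv_rep_mult:
  assumes x: "x \<in> carrier P" and y: "y \<in> carrier P"
  shows "x \<otimes> y \<otimes> inv rep (Z #> (x \<otimes> y))
       = (x \<otimes> inv rep (Z #> x)) \<otimes> (y \<otimes> inv rep (Z #> y)) \<otimes> factor_set (Z #> x) (Z #> y)"
proof -
  let ?u = "rep (Z #> x)" and ?v = "rep (Z #> y)"
  have u: "?u \<in> carrier P" and v: "?v \<in> carrier P" and w: "rep (Z #> (x \<otimes> y)) \<in> carrier P"
    using x y by (auto intro: rep_closed coset_in_Q)
  have b: "y \<otimes> inv ?v \<in> Z" and b_carrier: "y \<otimes> inv ?v \<in> carrier P"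
    using mult_inv_rep_mem[OF y] v y by auto
  have "(x \<otimes> inv ?u) \<otimes> (y \<otimes> inv ?v) \<otimes> factor_set (Z #> x) (Z #> y)
      = x \<otimes> (inv ?u \<otimes> (y \<otimes> inv ?v)) \<otimes> ?u \<otimes> ?v \<otimes> inv rep (Z #> (x \<otimes> y))"
    using x y u v w b_carrier N.rcos_sum[OF x y] by (simp add: factor_set_def m_assoc)
  also have "\<dots> = x \<otimes> ((y \<otimes> inv ?v) \<otimes> inv ?u) \<otimes> ?u \<otimes> ?v \<otimes> inv rep (Z #> (x \<otimes> y))"
    using central[OF b, of "inv ?u"] u by simp
  also have "\<dots> = x \<otimes> y \<otimes> inv rep (Z #> (x \<otimes> y))"
    using x y u v w by (simp add: m_assoc)
  finally show ?thesis ..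
qed

end

section \<open>Transgression\<close>

lemma hom_to_comm_group_derived:
  assumes "group G" "comm_group H" "F \<in> hom G H" "x \<in> derived G (carrier G)"
  shows "F x = \<one>\<^bsub>H\<^esub>"
proof -
  interpret F: group_hom G H F
    using assms by (simp add: group_hom_def group_hom_axioms_def comm_group_def)
  have "F ` derived G (carrier G) = derived H (F ` carrier G)"
    by (simp add: F.derived_img)
  also have "\<dots> = {\<one>\<^bsub>H\<^esub>}"
    using comm_group.derived_eq_singleton[OF assms(2)] F.hom_closed by blast
  finally show ?thesis using assms(4) by blast
qed

locale central_subgroup_coeff = central_subgroup + D: comm_group D for D :: "('d, 'n) monoid_scheme"
begin

interpretation N: normal Z P
  by (rule normal_Z)

interpretation Q: group Q
  by (rule group_Q)

definition factor_cocycle :: "('a \<Rightarrow> 'd) \<Rightarrow> ('a set \<times> 'a set \<Rightarrow> 'd)" where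
  "factor_cocycle f = (\<lambda>(U, V) \<in> carrier Q \<times> carrier Q. f (factor_set U V))"

definition transgression :: "('a \<Rightarrow> 'd) \<Rightarrow> ('a set \<times> 'a set \<Rightarrow> 'd) set" where
  "transgression f = coboundaries2 Q D #>\<^bsub>cocycle_group Q D\<^esub> factor_cocycle f"

lemma factor_cocycle_in_cocycles2:
  assumes f: "f \<in> hom (P\<lparr>carrier := Z\<rparr>) D"
  shows "factor_cocycle f \<in> cocycles2 Q D"
proof -
  have val: "f z \<in> carrier D" if "z \<in> Z" for z
    using f that by (auto simp: hom_def)
  have mult: "f (a \<otimes> b) = f a \<otimes>\<^bsub>D\<^esub> f b" if "a \<in> Z" "b \<in> Z" for a b
    using f that by (auto simp: hom_def)
  show ?thesis
    using factor_set_mem set_mult_in_Q factor_set_cocycle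
    by (auto simp: cocycles2_def factor_cocycle_def val mult[symmetric])
qed

lemma transgression_hom: "transgression \<in> hom (hom_group (P\<lparr>carrier := Z\<rparr>) D) (H2 Q D)"
proof (rule homI)
  interpret B: normal "coboundaries2 Q D" "cocycle_group Q D"
    by (rule normal_coboundaries2[OF Q.is_monoid D.comm_group_axioms])
  fix f g assume f: "f \<in> carrier (hom_group (P\<lparr>carrier := Z\<rparr>) D)"
    and g: "g \<in> carrier (hom_group (P\<lparr>carrier := Z\<rparr>) D)"
  have cocycles: "factor_cocycle f \<in> carrier (cocycle_group Q D)"
    "factor_cocycle g \<in> carrier (cocycle_group Q D)"
    using f g factor_cocycle_in_cocycles2 by (auto simp: hom_group_def cocycle_group_def)
  then show "transgression f \<in> carrier (H2 Q D)"
    by (auto simp: transgression_def H2_def FactGroup_def RCOSETS_def)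
  have "factor_cocycle (f \<otimes>\<^bsub>hom_group (P\<lparr>carrier := Z\<rparr>) D\<^esub> g)
      = factor_cocycle f \<otimes>\<^bsub>cocycle_group Q D\<^esub> factor_cocycle g"
    using factor_set_mem by (auto simp: factor_cocycle_def hom_group_def cocycle_group_def fun_eq_iff)
  then show "transgression (f \<otimes>\<^bsub>hom_group (P\<lparr>carrier := Z\<rparr>) D\<^esub> g)
      = transgression f \<otimes>\<^bsub>H2 Q D\<^esub> transgression g"
    using B.rcos_sum[OF cocycles] by (simp add: transgression_def H2_def)
qed

definition extension :: "('a \<Rightarrow> 'd) \<Rightarrow> ('a set \<Rightarrow> 'd) \<Rightarrow> 'a \<Rightarrow> 'd" where
  "extension f g x = f (x \<otimes> inv rep (Z #> x)) \<otimes>\<^bsub>D\<^esub> g (Z #> x)"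

lemma extension_hom:
  assumes f: "f \<in> hom (P\<lparr>carrier := Z\<rparr>) D" and g: "g \<in> carrier Q \<rightarrow> carrier D"
    and split: "factor_cocycle f = coboundary Q D g"
  shows "extension f g \<in> hom P D"
proof (rule homI)
  have fval: "f z \<in> carrier D" if "z \<in> Z" for z
    using f that by (auto simp: hom_def)
  have fmult: "f (a \<otimes> b) = f a \<otimes>\<^bsub>D\<^esub> f b" if "a \<in> Z" "b \<in> Z" for a b
    using f that by (auto simp: hom_def)
  have gval: "g U \<in> carrier D" if "U \<in> carrier Q" for U
    using g that by auto
  show "extension f g x \<in> carrier D" if "x \<in> carrier P" for x
    using that mult_inv_rep_mem coset_in_Q by (simp add: extension_def fval gval)
  fix x y assume x: "x \<in> carrier P" and y: "y \<in> carrier P"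
  define U V where "U = Z #> x" and "V = Z #> y"
  have U: "U \<in> carrier Q" and V: "V \<in> carrier Q" and UV: "U <#> V \<in> carrier Q"
    using x y by (auto simp: U_def V_def coset_in_Q set_mult_in_Q)
  have a: "x \<otimes> inv rep U \<in> Z" and b: "y \<otimes> inv rep V \<in> Z" and c: "factor_set U V \<in> Z"
    using x y U V by (auto simp: U_def V_def mult_inv_rep_mem factor_set_mem)
  have "f (factor_set U V) = g V \<otimes>\<^bsub>D\<^esub> inv\<^bsub>D\<^esub> g (U <#> V) \<otimes>\<^bsub>D\<^esub> g U"
    using fun_cong[OF split, of "(U, V)"] U V by (simp add: factor_cocycle_def coboundary_def)
  then have "extension f g (x \<otimes> y)
      = f (x \<otimes> inv rep U) \<otimes>\<^bsub>D\<^esub> f (y \<otimes> inv rep V) \<otimes>\<^bsub>D\<^esub>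
          (g V \<otimes>\<^bsub>D\<^esub> inv\<^bsub>D\<^esub> g (U <#> V) \<otimes>\<^bsub>D\<^esub> g U) \<otimes>\<^bsub>D\<^esub> g (U <#> V)"
    using x y a b c
    by (simp add: extension_def mult_inv_rep_mult N.rcos_sum U_def V_def fmult subgroup.m_closed[OF subgroup_Z])
  also have "\<dots> = (f (x \<otimes> inv rep U) \<otimes>\<^bsub>D\<^esub> g U) \<otimes>\<^bsub>D\<^esub> (f (y \<otimes> inv rep V) \<otimes>\<^bsub>D\<^esub> g V)
                  \<otimes>\<^bsub>D\<^esub> (inv\<^bsub>D\<^esub> g (U <#> V) \<otimes>\<^bsub>D\<^esub> g (U <#> V))"
    using a b U V UV by (simp only: fval gval D.inv_closed D.m_closed D.m_ac)
  also have "\<dots> = extension f g x \<otimes>\<^bsub>D\<^esub> extension f g y"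
    using a b U V UV by (simp add: extension_def U_def V_def fval gval)
  finally show "extension f g (x \<otimes> y) = extension f g x \<otimes>\<^bsub>D\<^esub> extension f g y" .
qed

lemma extension_restrict:
  assumes f: "f \<in> hom (P\<lparr>carrier := Z\<rparr>) D" and g: "g \<in> carrier Q \<rightarrow> carrier D"
    and split: "factor_cocycle f = coboundary Q D g" and z: "z \<in> Z"
  shows "extension f g z = f z"
proof -
  have Z1: "Z #> \<one> = Z" and Zz: "Z #> z = Z"
    using z subgroup.subset[OF subgroup_Z] N.rcos_const[OF is_group] by (auto intro: coset_mult_one)
  have r: "inv rep Z \<in> Z"
    using mult_inv_rep_mem[OF one_closed] rep_closed[OF coset_in_Q[OF one_closed]] by (simp add: Z1)
  have val: "f a \<in> carrier D" if "a \<in> Z" for a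
    using f that by (auto simp: hom_def)
  have "extension f g z = f z \<otimes>\<^bsub>D\<^esub> (f (inv rep Z) \<otimes>\<^bsub>D\<^esub> g Z)"
    using f z r g coset_in_Q[OF one_closed]
    by (auto simp: extension_def Zz Z1 hom_def val intro: D.m_assoc)
  also have "f (inv rep Z) \<otimes>\<^bsub>D\<^esub> g Z = extension f g \<one>"
    using r rep_closed[OF coset_in_Q[OF one_closed]] by (simp add: extension_def Z1)
  also have "\<dots> = \<one>\<^bsub>D\<^esub>"
    using extension_hom[OF f g split] is_group D.is_group by (simp add: hom_one)
  finally show ?thesis
    using val[OF z] by simp
qed

lemma transgression_inj:
  assumes Z_derived: "Z \<subseteq> derived P (carrier P)"
  shows "inj_on transgression (carrier (hom_group (P\<lparr>carrier := Z\<rparr>) D))"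
proof -
  interpret HZ: comm_group "hom_group (P\<lparr>carrier := Z\<rparr>) D"
    using comm_group_hom_group[OF group.is_monoid[OF subgroup_imp_group[OF subgroup_Z]] D.comm_group_axioms] .
  interpret T: group_hom "hom_group (P\<lparr>carrier := Z\<rparr>) D" "H2 Q D" transgression
    using transgression_hom group_H2[OF Q.is_monoid D.comm_group_axioms]
    by (simp add: group_hom_def group_hom_axioms_def HZ.is_group)
  have "f = \<one>\<^bsub>hom_group (P\<lparr>carrier := Z\<rparr>) D\<^esub>"
    if f: "f \<in> carrier (hom_group (P\<lparr>carrier := Z\<rparr>) D)" and trivial: "transgression f = coboundaries2 Q D" for f
  proof -
    interpret B: normal "coboundaries2 Q D" "cocycle_group Q D"
      by (rule normal_coboundaries2[OF Q.is_monoid D.comm_group_axioms])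
    have f_hom: "f \<in> hom (P\<lparr>carrier := Z\<rparr>) D" and f_ext: "f \<in> extensional Z"
      using f by (auto simp: hom_group_def)
    have "factor_cocycle f \<in> coboundaries2 Q D #>\<^bsub>cocycle_group Q D\<^esub> factor_cocycle f"
      using factor_cocycle_in_cocycles2[OF f_hom]
      by (intro B.rcos_self[OF _ B.subgroup_axioms]) (simp add: cocycle_group_def)
    then have "factor_cocycle f \<in> coboundaries2 Q D"
      using trivial by (simp add: transgression_def)
    then obtain g where g: "g \<in> carrier Q \<rightarrow>\<^sub>E carrier D" and split: "factor_cocycle f = coboundary Q D g"
      by (auto simp: coboundaries2_eq_image)
    have g': "g \<in> carrier Q \<rightarrow> carrier D"
      using g by (simp add: PiE_def)
    have "f z = \<one>\<^bsub>D\<^esub>" if "z \<in> Z" for z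
    proof -
      have "f z = extension f g z"
        using extension_restrict[OF f_hom g' split that] ..
      also have "\<dots> = \<one>\<^bsub>D\<^esub>"
        using that Z_derived
        by (intro hom_to_comm_group_derived[OF is_group D.comm_group_axioms extension_hom[OF f_hom g' split]]) auto
      finally show ?thesis .
    qed
    with f_ext show ?thesis
      by (auto simp: hom_group_def extensional_def)
  qed
  then have "kernel (hom_group (P\<lparr>carrier := Z\<rparr>) D) (H2 Q D) transgression = {\<one>\<^bsub>hom_group (P\<lparr>carrier := Z\<rparr>) D\<^esub>}"
    by (auto simp: kernel_def H2_def)
  then show ?thesis
    using T.inj_iff_trivial_ker by simp
qed

end

lemma transgression_embedding:
  assumes "group P" "subgroup Z P" "\<And>z x. z \<in> Z \<Longrightarrow> x \<in> carrier P \<Longrightarrow> z \<otimes>\<^bsub>P\<^esub> x = x \<otimes>\<^bsub>P\<^esub> z"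
    and "Z \<subseteq> derived P (carrier P)" "comm_group D"
  shows "\<exists>\<phi>. \<phi> \<in> hom (hom_group (P\<lparr>carrier := Z\<rparr>) D) (H2 (P Mod Z) D)
             \<and> inj_on \<phi> (carrier (hom_group (P\<lparr>carrier := Z\<rparr>) D))"
proof -
  interpret central_subgroup_coeff P Z D
    using assms by (auto simp: central_subgroup_coeff_def central_subgroup_def central_subgroup_axioms_def)
  show ?thesis
    using transgression_hom transgression_inj[OF assms(4)] by blast
qed

lemma (in group) transgression_embedding_subgroup:
  assumes S: "subgroup S G" and Z: "subgroup Z G" "Z \<subseteq> derived G S"
    and central: "\<And>z x. z \<in> Z \<Longrightarrow> x \<in> S \<Longrightarrow> z \<otimes> x = x \<otimes> z" and D: "comm_group D"
  shows "\<exists>\<phi>. \<phi> \<in> hom (hom_group (G\<lparr>carrier := Z\<rparr>) D) (H2 (G\<lparr>carrier := S\<rparr> Mod Z) D)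
             \<and> inj_on \<phi> (carrier (hom_group (G\<lparr>carrier := Z\<rparr>) D))"
proof -
  have ZS: "Z \<subseteq> S"
    using Z(2) derived_incl[OF _ S] by blast
  have "Z \<subseteq> derived (G\<lparr>carrier := S\<rparr>) (carrier (G\<lparr>carrier := S\<rparr>))"
    using Z(2) derived_consistent[OF _ S] by simp
  then have "\<exists>\<phi>. \<phi> \<in> hom (hom_group (G\<lparr>carrier := S\<rparr>\<lparr>carrier := Z\<rparr>) D) (H2 (G\<lparr>carrier := S\<rparr> Mod Z) D)
             \<and> inj_on \<phi> (carrier (hom_group (G\<lparr>carrier := S\<rparr>\<lparr>carrier := Z\<rparr>) D))"
    using central
    by (intro transgression_embedding[OF subgroup_imp_group[OF S] subgroup_incl[OF Z(1) S ZS] _ _ D]) auto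
  then show ?thesis
    by simp
qed

theorem theorem3p7:
  fixes G :: "('g, 'm) monoid_scheme" and D :: "('d, 'n) monoid_scheme" and H K :: "'g set"
  assumes "group G"
    and "H \<lhd> G" and "K \<lhd> G"
    and "H <#>\<^bsub>G\<^esub> K = carrier G"
    and "\<forall>h \<in> H. \<forall>k \<in> K. h \<otimes>\<^bsub>G\<^esub> k = k \<otimes>\<^bsub>G\<^esub> h"
    and "divisible_group D"
  shows "let Z = derived G H \<inter> derived G K in
         \<exists>\<phi>. \<phi> \<in> hom (hom_group (G\<lparr>carrier := Z\<rparr>) D)
                     (H2 (G\<lparr>carrier := H\<rparr> Mod Z) D \<times>\<times> H2 (G\<lparr>carrier := K\<rparr> Mod Z) D)
           \<and> inj_on \<phi> (carrier (hom_group (G\<lparr>carrier := Z\<rparr>) D))"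
proof -
  interpret G: group G by (rule assms(1))
  define Z where "Z = derived G H \<inter> derived G K"
  have H: "subgroup H G" and K: "subgroup K G"
    using assms(2,3) normal_imp_subgroup by auto
  have D: "comm_group D"
    using assms(6) by (simp add: divisible_group_def)
  have Z: "subgroup Z G" "Z \<subseteq> H" "Z \<subseteq> K"
    using G.derived_is_subgroup G.subgroups_Inter_pair G.derived_incl[OF order_refl H] G.derived_incl[OF order_refl K]
      subgroup.subset[OF H] subgroup.subset[OF K]
    by (auto simp: Z_def)
  obtain \<phi> where \<phi>: "\<phi> \<in> hom (hom_group (G\<lparr>carrier := Z\<rparr>) D) (H2 (G\<lparr>carrier := H\<rparr> Mod Z) D)"
    and inj: "inj_on \<phi> (carrier (hom_group (G\<lparr>carrier := Z\<rparr>) D))"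
    using G.transgression_embedding_subgroup[OF H Z(1) _ _ D] Z(3) assms(5) by (fastforce simp: Z_def)
  obtain \<psi> where \<psi>: "\<psi> \<in> hom (hom_group (G\<lparr>carrier := Z\<rparr>) D) (H2 (G\<lparr>carrier := K\<rparr> Mod Z) D)"
    using G.transgression_embedding_subgroup[OF K Z(1) _ _ D] Z(2) assms(5) by (fastforce simp: Z_def)
  have "(\<lambda>f. (\<phi> f, \<psi> f)) \<in> hom (hom_group (G\<lparr>carrier := Z\<rparr>) D)
          (H2 (G\<lparr>carrier := H\<rparr> Mod Z) D \<times>\<times> H2 (G\<lparr>carrier := K\<rparr> Mod Z) D)"
    using \<phi> \<psi> by (simp add: hom_paired)
  moreover have "inj_on (\<lambda>f. (\<phi> f, \<psi> f)) (carrier (hom_group (G\<lparr>carrier := Z\<rparr>) D))"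
    using inj by (auto simp: inj_on_def)
  ultimately show ?thesis
    unfolding Let_def Z_def[symmetric] by blast
qed

end
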